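(* Let $m\ge1$, $0\le r\le m$, $\delta\in(0,\tfrac12)$, and let $W$ be the random coefficient vector described in the context. Let $A\in GL_m(\mathbb{F}_2)$, $b\in\mathbb{F}_2^m$, and let $\pi=\pi_{A,b,r}:\mathbb{F}_2^{\binom{m}{r}}\to\mathbb{F}_2^{\binom{m}{r}}$ be the map sending the coefficient vector $(u_I)_{|I|=r}$ of $P(x)=\sum_{|I|=r}u_Ix_I$ to the vector of coefficients of the degree-$r$ monomials $x_J$ ($|J|=r$) in the multilinear reduction of $P(Ax+b)$. Then for every linear subspace $\mathcal{G}\subseteq\mathbb{F}_2^{\binom{m}{r}}$, \[d(U_{\mathcal{G}};\,W_r|W_{>r})=d(U_{\pi(\mathcal{G})};\,W_r|W_{>r}),\] where $\pi(\mathcal{G})=\{\pi(g):g\in\mathcal{G}\}$ and $U_{\mathcal{H}}$ denotes a uniform random variable on $\mathcal{H}$.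
   Context: Let $n=2^m$. Every function $\mathbb{F}_2^m\to\mathbb{F}_2$ is uniquely a multilinear polynomial $\sum_{S\subseteq[m]}c_Sx_S$ with $x_S=\prod_{i\in S}x_i$; "multilinear reduction" means using $x_i^2=x_i$. Let $Z=(Z_x)_{x\in\mathbb{F}_2^m}$ have i.i.d. Bernoulli$(\delta)$ entries, and let $W=(W_S)_{S\subseteq[m]}$ be the coefficient vector of the multilinear polynomial whose evaluation table on $\mathbb{F}_2^m$ is $Z$ (equivalently $W_S=\sum_{x:\,\{i:x_i=1\}\subseteq S}Z_x$). Set $W_r=(W_S)_{|S|=r}$ and $W_{>r}=(W_S)_{|S|>r}$. Entropies are base 2, $H(V|C)=H(V,C)-H(C)$. For a subspace $\mathcal{H}$, $d(U_{\mathcal{H}};W_r|W_{>r}):=H(U+W'_r\mid W'_{>r})-\tfrac12\big(H(U)+H(W_r|W_{>r})\big)$, where $(W'_r,W'_{>r})\sim(W_r,W_{>r})$ and $U\sim U_{\mathcal{H}}$ is independent of it. *)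

theory Defs
  imports "HOL-Library.Z2" "Jordan_Normal_Form.Matrix"
begin

(* F_2 is the type bit (a field). Points of F_2^m are vectors in carrier_vec m.
   Monomials x_S are indexed by sets S \<subseteq> {..<m}. *)

definition xmon :: "nat set \<Rightarrow> bit vec \<Rightarrow> bit" where
  "xmon S x = (\<Prod>i\<in>S. x $ i)"

definition mcoeffs :: "nat \<Rightarrow> (bit vec \<Rightarrow> bit) \<Rightarrow> nat set \<Rightarrow> bit" where
  "mcoeffs m f = (THE c. (\<forall>S. \<not> S \<subseteq> {..<m} \<longrightarrow> c S = 0) \<and>
      (\<forall>x\<in>carrier_vec m. f x = (\<Sum>S\<in>Pow {..<m}. c S * xmon S x)))"

definition layer :: "nat \<Rightarrow> nat \<Rightarrow> nat set set" where
  "layer m r = {S. S \<subseteq> {..<m} \<and> card S = r}"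

(* F_2^{binom m r}: vectors indexed by layer m r, zero outside *)
definition vecs :: "nat \<Rightarrow> nat \<Rightarrow> (nat set \<Rightarrow> bit) set" where
  "vecs m r = {u. \<forall>S. S \<notin> layer m r \<longrightarrow> u S = 0}"

definition f2_subspace :: "nat \<Rightarrow> nat \<Rightarrow> (nat set \<Rightarrow> bit) set \<Rightarrow> bool" where
  "f2_subspace m r G \<longleftrightarrow> G \<subseteq> vecs m r \<and> (\<lambda>_. 0) \<in> G \<and>
     (\<forall>u\<in>G. \<forall>v\<in>G. (\<lambda>S. u S + v S) \<in> G) \<and> (\<forall>c. \<forall>u\<in>G. (\<lambda>S. c * u S) \<in> G)"

(* sample space of Z = (Z_x)_{x \<in> F_2^m} and its i.i.d. Bernoulli(delta) law *)
definition ZSpace :: "nat \<Rightarrow> (bit vec \<Rightarrow> bit) set" where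
  "ZSpace m = carrier_vec m \<rightarrow>\<^sub>E UNIV"

definition zprob :: "nat \<Rightarrow> real \<Rightarrow> (bit vec \<Rightarrow> bit) \<Rightarrow> real" where
  "zprob m \<delta> z = (\<Prod>x\<in>carrier_vec m. if z x = 1 then \<delta> else 1 - \<delta>)"

definition Wc :: "nat \<Rightarrow> (bit vec \<Rightarrow> bit) \<Rightarrow> nat set \<Rightarrow> bit" where
  "Wc m z = mcoeffs m z"

definition Wr :: "nat \<Rightarrow> nat \<Rightarrow> (bit vec \<Rightarrow> bit) \<Rightarrow> nat set \<Rightarrow> bit" where
  "Wr m r z = (\<lambda>S. if S \<in> layer m r then Wc m z S else 0)"

definition Wgt :: "nat \<Rightarrow> nat \<Rightarrow> (bit vec \<Rightarrow> bit) \<Rightarrow> nat set \<Rightarrow> bit" where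
  "Wgt m r z = (\<lambda>S. if S \<subseteq> {..<m} \<and> r < card S then Wc m z S else 0)"

definition prob_of :: "'w set \<Rightarrow> ('w \<Rightarrow> real) \<Rightarrow> ('w \<Rightarrow> 'v) \<Rightarrow> 'v \<Rightarrow> real" where
  "prob_of \<Omega> p X v = (\<Sum>\<omega>\<in>\<Omega>. if X \<omega> = v then p \<omega> else 0)"

definition entropy2 :: "'w set \<Rightarrow> ('w \<Rightarrow> real) \<Rightarrow> ('w \<Rightarrow> 'v) \<Rightarrow> real" where
  "entropy2 \<Omega> p X = - (\<Sum>v\<in>X ` \<Omega>. prob_of \<Omega> p X v * log 2 (prob_of \<Omega> p X v))"

definition cond_entropy2 :: "'w set \<Rightarrow> ('w \<Rightarrow> real) \<Rightarrow> ('w \<Rightarrow> 'v) \<Rightarrow> ('w \<Rightarrow> 'u) \<Rightarrow> real" where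
  "cond_entropy2 \<Omega> p X Y = entropy2 \<Omega> p (\<lambda>\<omega>. (X \<omega>, Y \<omega>)) - entropy2 \<Omega> p Y"

(* d(U_H; W_r | W_{>r}); U uniform on H, independent of (W'_r, W'_{>r}) *)
definition dist_W :: "nat \<Rightarrow> real \<Rightarrow> nat \<Rightarrow> (nat set \<Rightarrow> bit) set \<Rightarrow> real" where
  "dist_W m \<delta> r H =
     cond_entropy2 (H \<times> ZSpace m) (\<lambda>(u, z). zprob m \<delta> z / real (card H))
        (\<lambda>(u, z). (\<lambda>S. u S + Wr m r z S)) (\<lambda>(u, z). Wgt m r z)
     - (entropy2 H (\<lambda>u. 1 / real (card H)) id
        + cond_entropy2 (ZSpace m) (zprob m \<delta>) (Wr m r) (Wgt m r)) / 2"

definition pi_map :: "nat \<Rightarrow> bit mat \<Rightarrow> bit vec \<Rightarrow> nat \<Rightarrow> (nat set \<Rightarrow> bit) \<Rightarrow> nat set \<Rightarrow> bit" where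
  "pi_map m A b r u = (\<lambda>J. if J \<in> layer m r then
      mcoeffs m (\<lambda>x. \<Sum>I\<in>layer m r. u I * xmon I (A *\<^sub>v x + b)) J else 0)"

end

theory Submission
  imports Defs
begin

(* The affine map phi x = A x + b permutes F_2^m, so z \<mapsto> z \<circ> phi preserves the i.i.d. law of Z.
   Substituting phi into a multilinear polynomial never raises its degree, and phi is invertible,
   so z \<circ> phi and z' \<circ> phi agree above degree r iff z and z' do.  If they do, z + z' has degree
   at most r, and the degree-r part of (z + z') \<circ> phi is pi of the degree-r part of z + z'.
   Hence (u, z) \<mapsto> (pi u, z \<circ> phi) is a measure-preserving bijection G \<times> Z \<rightarrow> pi(G) \<times> Z that
   preserves the partitions induced by W_{>r} and by (u + W_r, W_{>r}); the entropies in d depend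
   only on these partitions.  pi is injective since pi_{B, B b, r} inverts it for B = A^-1. *)

(* HOL-Library.Z2 rewrites + and * on bit to XOR and AND by default. *)
declare add_bit_eq_xor [simp del] mult_bit_eq_and [simp del]

lemma bit_add_self [simp]: "(a::bit) + a = 0"
  by (cases a) simp_all

lemma bit_add_eq_0_iff: "(a::bit) + b = 0 \<longleftrightarrow> a = b"
  by (cases a; cases b) simp_all

lemma bit_add_eq_add_iff: "(a::bit) + b = c + d \<longleftrightarrow> a + c = b + d"
  by (cases a; cases b; cases c; cases d) simp_all

lemma bit_vec_add_add_cancel:
  "v \<in> carrier_vec m \<Longrightarrow> w \<in> carrier_vec m \<Longrightarrow> (v::bit vec) + (w + w) = v"
  by (intro eq_vecI) simp_all

section \<open>Multilinear interpolation on F_2^m\<close>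

lemma xmon_eq_if: "finite S \<Longrightarrow> xmon S x = (if \<forall>i\<in>S. x $ i = 1 then 1 else 0)"
proof (induction S rule: finite_induct)
  case empty
  then show ?case by (simp add: xmon_def)
next
  case (insert a S)
  then show ?case by (cases "x $ a") (auto simp: xmon_def)
qed

lemma xmon_empty: "xmon {} x = 1"
  by (simp add: xmon_def)

lemma xmon_singleton: "xmon {j} x = x $ j"
  by (simp add: xmon_def)

lemma xmon_insert: "finite S \<Longrightarrow> a \<notin> S \<Longrightarrow> xmon (insert a S) x = x $ a * xmon S x"
  by (simp add: xmon_def)

lemma xmon_mult: "finite S \<Longrightarrow> finite T \<Longrightarrow> xmon S x * xmon T x = xmon (S \<union> T) x"
  by (auto simp: xmon_eq_if)

definition indicator_vec :: "nat \<Rightarrow> nat set \<Rightarrow> bit vec" where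
  "indicator_vec m S = vec m (\<lambda>i. if i \<in> S then 1 else 0)"

lemma indicator_vec_carrier [simp]: "indicator_vec m S \<in> carrier_vec m"
  by (simp add: indicator_vec_def)

lemma xmon_indicator_vec:
  assumes "T \<subseteq> {..<m}"
  shows "xmon T (indicator_vec m S) = (if T \<subseteq> S then 1 else 0)"
proof -
  have "indicator_vec m S $ i = (if i \<in> S then 1 else 0)" if "i \<in> T" for i
    using that assms by (auto simp: indicator_vec_def)
  then show ?thesis
    using assms finite_subset by (subst xmon_eq_if) auto
qed

lemma carrier_vec_eq_indicator_vec: "x \<in> carrier_vec m \<Longrightarrow> x = indicator_vec m {i. i < m \<and> x $ i = 1}"
  by (rule eq_vecI) (auto simp: indicator_vec_def)

lemma sum_Pow_insert:
  assumes "finite X" and "a \<notin> X"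
  shows "(\<Sum>S\<in>Pow (insert a X). h S) = (\<Sum>S\<in>Pow X. h S) + (\<Sum>S\<in>Pow X. h (insert a S))"
proof -
  have "inj_on (insert a) (Pow X)"
    using assms(2) unfolding inj_on_def by (metis Diff_insert_absorb PowD in_mono)
  moreover have "Pow X \<inter> insert a ` Pow X = {}" using assms(2) by auto
  ultimately show ?thesis
    using assms(1) by (simp add: Pow_insert sum.union_disjoint sum.reindex)
qed

(* Over F_2 each T \<subset> X is counted 2 ^ card (X - T) times, an even number. *)
lemma sum_Pow_sum_Pow_bit: "finite X \<Longrightarrow> (\<Sum>S\<in>Pow X. \<Sum>T\<in>Pow S. g T) = (g X :: bit)"
proof (induction X arbitrary: g rule: finite_induct)
  case empty
  then show ?case by simp
next
  case (insert a X)
  have fin: "finite S" "a \<notin> S" if "S \<in> Pow X" for S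
    using that insert finite_subset by blast+
  have "(\<Sum>S\<in>Pow (insert a X). \<Sum>T\<in>Pow S. g T)
      = (\<Sum>S\<in>Pow X. \<Sum>T\<in>Pow S. g T) + (\<Sum>S\<in>Pow X. \<Sum>T\<in>Pow (insert a S). g T)"
    using insert by (simp add: sum_Pow_insert)
  also have "(\<Sum>S\<in>Pow X. \<Sum>T\<in>Pow (insert a S). g T)
      = (\<Sum>S\<in>Pow X. (\<Sum>T\<in>Pow S. g T) + (\<Sum>T\<in>Pow S. g (insert a T)))"
    by (intro sum.cong refl sum_Pow_insert fin)
  also have "\<dots> = (\<Sum>S\<in>Pow X. \<Sum>T\<in>Pow S. g T) + (\<Sum>S\<in>Pow X. \<Sum>T\<in>Pow S. g (insert a T))"
    by (rule sum.distrib)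
  also have "(\<Sum>S\<in>Pow X. \<Sum>T\<in>Pow S. g (insert a T)) = g (insert a X)"
    by (rule insert.IH)
  finally show ?case by (simp add: add.assoc[symmetric])
qed

definition eval_mpoly :: "nat \<Rightarrow> (nat set \<Rightarrow> bit) \<Rightarrow> bit vec \<Rightarrow> bit" where
  "eval_mpoly m c x = (\<Sum>S\<in>Pow {..<m}. c S * xmon S x)"

definition mcoeff_space :: "nat \<Rightarrow> (nat set \<Rightarrow> bit) set" where
  "mcoeff_space m = {c. \<forall>S. \<not> S \<subseteq> {..<m} \<longrightarrow> c S = 0}"

lemma eval_mpoly_add: "eval_mpoly m (\<lambda>S. c S + d S) x = eval_mpoly m c x + eval_mpoly m d x"
  by (simp add: eval_mpoly_def distrib_right sum.distrib)

lemma mpoly_interpolation: "\<exists>c\<in>mcoeff_space m. \<forall>x\<in>carrier_vec m. eval_mpoly m c x = f x"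
proof
  define c where "c S = (if S \<subseteq> {..<m} then \<Sum>T\<in>Pow S. f (indicator_vec m T) else 0)" for S
  show "c \<in> mcoeff_space m" by (simp add: mcoeff_space_def c_def)
  show "\<forall>x\<in>carrier_vec m. eval_mpoly m c x = f x"
  proof
    fix x :: "bit vec" assume x: "x \<in> carrier_vec m"
    define X where "X = {i. i < m \<and> x $ i = 1}"
    have X: "X \<subseteq> {..<m}" by (auto simp: X_def)
    have "eval_mpoly m c x = (\<Sum>S\<in>Pow {..<m}. if S \<subseteq> X then c S else 0)"
      unfolding eval_mpoly_def
      by (subst carrier_vec_eq_indicator_vec[OF x]) (auto simp: X_def xmon_indicator_vec intro: sum.cong)
    also have "\<dots> = (\<Sum>S\<in>Pow X. c S)"
      using X by (intro sum.mono_neutral_cong_right) auto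
    also have "\<dots> = (\<Sum>S\<in>Pow X. \<Sum>T\<in>Pow S. f (indicator_vec m T))"
      using X by (intro sum.cong) (auto simp: c_def)
    also have "\<dots> = f x"
      using X finite_subset carrier_vec_eq_indicator_vec[OF x]
      by (simp add: sum_Pow_sum_Pow_bit X_def)
    finally show "eval_mpoly m c x = f x" .
  qed
qed

lemma eval_mpoly_eq_0_imp_coeff_eq_0:
  assumes c: "c \<in> mcoeff_space m" and zero: "\<And>x. x \<in> carrier_vec m \<Longrightarrow> eval_mpoly m c x = 0"
  shows "c S = 0"
proof (induction S rule: measure_induct_rule[where f = card])
  case (less S)
  show ?case
  proof (cases "S \<subseteq> {..<m}")
    case False
    then show ?thesis using c by (simp add: mcoeff_space_def)
  next
    case True
    then have "finite S" using finite_subset by blast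
    have "0 = eval_mpoly m c (indicator_vec m S)" using zero by simp
    also have "\<dots> = (\<Sum>T\<in>Pow {..<m}. if T = S then c S else 0)"
      unfolding eval_mpoly_def
      using less psubset_card_mono[OF \<open>finite S\<close>] by (intro sum.cong) (auto simp: xmon_indicator_vec)
    also have "\<dots> = c S" using True by simp
    finally show ?thesis by simp
  qed
qed

lemma mcoeffs_eqI:
  assumes c: "c \<in> mcoeff_space m" and f: "\<And>x. x \<in> carrier_vec m \<Longrightarrow> eval_mpoly m c x = f x"
  shows "mcoeffs m f = c"
  unfolding mcoeffs_def
proof (rule the_equality)
  show "(\<forall>S. \<not> S \<subseteq> {..<m} \<longrightarrow> c S = 0) \<and>
      (\<forall>x\<in>carrier_vec m. f x = (\<Sum>S\<in>Pow {..<m}. c S * xmon S x))"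
    using c f by (simp add: mcoeff_space_def eval_mpoly_def)
next
  fix d assume d: "(\<forall>S. \<not> S \<subseteq> {..<m} \<longrightarrow> d S = 0) \<and>
      (\<forall>x\<in>carrier_vec m. f x = (\<Sum>S\<in>Pow {..<m}. d S * xmon S x))"
  have "(\<lambda>S. d S + c S) \<in> mcoeff_space m" using c d by (simp add: mcoeff_space_def)
  moreover have "eval_mpoly m (\<lambda>S. d S + c S) x = 0" if "x \<in> carrier_vec m" for x
    using that d f[of x] by (simp add: eval_mpoly_add) (simp add: eval_mpoly_def)
  ultimately have "d S + c S = 0" for S by (rule eval_mpoly_eq_0_imp_coeff_eq_0)
  then show "d = c" by (simp add: fun_eq_iff bit_add_eq_0_iff)
qed

lemma mcoeffs_in_space: "mcoeffs m f \<in> mcoeff_space m"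
  and eval_mcoeffs: "x \<in> carrier_vec m \<Longrightarrow> eval_mpoly m (mcoeffs m f) x = f x"
proof -
  obtain c where "c \<in> mcoeff_space m" "\<forall>x\<in>carrier_vec m. eval_mpoly m c x = f x"
    using mpoly_interpolation by blast
  moreover from this have "mcoeffs m f = c" by (intro mcoeffs_eqI) auto
  ultimately show "mcoeffs m f \<in> mcoeff_space m" "x \<in> carrier_vec m \<Longrightarrow> eval_mpoly m (mcoeffs m f) x = f x"
    by auto
qed

lemma mcoeffs_outside: "\<not> S \<subseteq> {..<m} \<Longrightarrow> mcoeffs m f S = 0"
  using mcoeffs_in_space by (auto simp: mcoeff_space_def)

lemma mcoeffs_eval_mpoly: "c \<in> mcoeff_space m \<Longrightarrow> mcoeffs m (eval_mpoly m c) = c"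
  by (rule mcoeffs_eqI) simp_all

lemma mcoeffs_cong: "(\<And>x. x \<in> carrier_vec m \<Longrightarrow> f x = g x) \<Longrightarrow> mcoeffs m f = mcoeffs m g"
  by (rule mcoeffs_eqI) (simp_all add: mcoeffs_in_space eval_mcoeffs)

lemma mcoeffs_add: "mcoeffs m (\<lambda>x. f x + g x) = (\<lambda>S. mcoeffs m f S + mcoeffs m g S)"
  using mcoeffs_in_space[of m f] mcoeffs_in_space[of m g]
  by (intro mcoeffs_eqI) (auto simp: mcoeff_space_def eval_mpoly_add eval_mcoeffs)

lemma mcoeffs_scale: "mcoeffs m (\<lambda>x. a * f x) = (\<lambda>S. a * mcoeffs m f S)"
  using mcoeffs_in_space[of m f] eval_mcoeffs[of _ m f]
  by (intro mcoeffs_eqI) (auto simp: mcoeff_space_def eval_mpoly_def mult.assoc simp flip: sum_distrib_left)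

lemma mcoeffs_zero: "mcoeffs m (\<lambda>x. 0) = (\<lambda>S. 0)"
  by (rule mcoeffs_eqI) (simp_all add: mcoeff_space_def eval_mpoly_def)

lemma mcoeffs_sum: "finite I \<Longrightarrow> mcoeffs m (\<lambda>x. \<Sum>i\<in>I. f i x) = (\<lambda>S. \<Sum>i\<in>I. mcoeffs m (f i) S)"
  by (induction I rule: finite_induct) (simp_all add: mcoeffs_zero mcoeffs_add)

lemma mcoeffs_xmon: "U \<subseteq> {..<m} \<Longrightarrow> mcoeffs m (xmon U) = (\<lambda>S. of_bool (S = U))"
  by (rule mcoeffs_eqI) (auto simp: mcoeff_space_def eval_mpoly_def Int_def Collect_conv_if)

section \<open>Degree and affine substitutions\<close>

definition mdeg_le :: "nat \<Rightarrow> nat \<Rightarrow> (bit vec \<Rightarrow> bit) \<Rightarrow> bool" where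
  "mdeg_le m k f \<longleftrightarrow> (\<forall>T. k < card T \<longrightarrow> mcoeffs m f T = 0)"

lemma mdeg_le_congI:
  "mdeg_le m k g \<Longrightarrow> (\<And>x. x \<in> carrier_vec m \<Longrightarrow> f x = g x) \<Longrightarrow> mdeg_le m k f"
  unfolding mdeg_le_def using mcoeffs_cong[of m f g] by simp

lemma mdeg_le_mono: "mdeg_le m k f \<Longrightarrow> k \<le> k' \<Longrightarrow> mdeg_le m k' f"
  unfolding mdeg_le_def by auto

lemma mdeg_le_add: "mdeg_le m k f \<Longrightarrow> mdeg_le m k g \<Longrightarrow> mdeg_le m k (\<lambda>x. f x + g x)"
  unfolding mdeg_le_def by (simp add: mcoeffs_add)

lemma mdeg_le_sum:
  "finite I \<Longrightarrow> (\<And>i. i \<in> I \<Longrightarrow> mdeg_le m k (f i)) \<Longrightarrow>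
    mdeg_le m k (\<lambda>x. \<Sum>i\<in>I. f i x)"
  unfolding mdeg_le_def by (simp add: mcoeffs_sum)

lemma mdeg_le_scale: "(a \<noteq> 0 \<Longrightarrow> mdeg_le m k f) \<Longrightarrow> mdeg_le m k (\<lambda>x. a * f x)"
  unfolding mdeg_le_def by (cases "a = 0") (simp_all add: mcoeffs_scale mcoeffs_zero)

lemma mdeg_le_xmon: "U \<subseteq> {..<m} \<Longrightarrow> mdeg_le m (card U) (xmon U)"
  unfolding mdeg_le_def by (auto simp: mcoeffs_xmon)

lemma mdeg_le_mult:
  assumes f: "mdeg_le m j f" and g: "mdeg_le m k g"
  shows "mdeg_le m (j + k) (\<lambda>x. f x * g x)"
proof -
  let ?cf = "mcoeffs m f" and ?cg = "mcoeffs m g"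
  have "f x * g x = (\<Sum>S\<in>Pow {..<m}. \<Sum>T\<in>Pow {..<m}. (?cf S * ?cg T) * xmon (S \<union> T) x)"
    if x: "x \<in> carrier_vec m" for x
  proof -
    have "f x * g x = eval_mpoly m ?cf x * eval_mpoly m ?cg x"
      using x by (simp add: eval_mcoeffs)
    also have "\<dots> = (\<Sum>S\<in>Pow {..<m}. \<Sum>T\<in>Pow {..<m}. (?cf S * xmon S x) * (?cg T * xmon T x))"
      unfolding eval_mpoly_def by (rule sum_product)
    also have "\<dots> = (\<Sum>S\<in>Pow {..<m}. \<Sum>T\<in>Pow {..<m}. (?cf S * ?cg T) * xmon (S \<union> T) x)"
    proof (intro sum.cong refl)
      fix S T assume "S \<in> Pow {..<m}" "T \<in> Pow {..<m}"
      then have "xmon S x * xmon T x = xmon (S \<union> T) x"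
        by (intro xmon_mult) (auto intro: finite_subset)
      then show "(?cf S * xmon S x) * (?cg T * xmon T x) = (?cf S * ?cg T) * xmon (S \<union> T) x"
        by (simp add: mult_ac)
    qed
    finally show ?thesis .
  qed
  moreover have "mdeg_le m (j + k) (\<lambda>x. \<Sum>S\<in>Pow {..<m}. \<Sum>T\<in>Pow {..<m}. (?cf S * ?cg T) * xmon (S \<union> T) x)"
  proof (intro mdeg_le_sum mdeg_le_scale finite_Pow_iff[THEN iffD2] finite_lessThan)
    fix S T assume S: "S \<in> Pow {..<m}" and T: "T \<in> Pow {..<m}" and "?cf S * ?cg T \<noteq> 0"
    then have "card S \<le> j" "card T \<le> k"
      using f g by (auto simp: mdeg_le_def not_le[symmetric])
    then have "card (S \<union> T) \<le> j + k" using card_Un_le[of S T] by linarith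
    then show "mdeg_le m (j + k) (xmon (S \<union> T))"
      using S T by (intro mdeg_le_mono[OF mdeg_le_xmon]) auto
  qed
  ultimately show ?thesis by (rule mdeg_le_congI[rotated])
qed

lemma mdeg_le_affine_coord:
  assumes A: "A \<in> carrier_mat m m" and b: "b \<in> carrier_vec m" and i: "i < m"
  shows "mdeg_le m 1 (\<lambda>x. (A *\<^sub>v x + b) $ i)"
proof -
  have "(A *\<^sub>v x + b) $ i = (\<Sum>j<m. A $$ (i, j) * xmon {j} x) + b $ i * xmon {} x"
    if x: "x \<in> carrier_vec m" for x
    using A b x i by (simp add: scalar_prod_def lessThan_atLeast0 xmon_empty xmon_singleton)
  moreover have "mdeg_le m 1 (\<lambda>x. (\<Sum>j<m. A $$ (i, j) * xmon {j} x) + b $ i * xmon {} x)"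
    using mdeg_le_mono[OF mdeg_le_xmon[of "{}" m]] mdeg_le_xmon[of "{_}" m]
    by (intro mdeg_le_add mdeg_le_sum mdeg_le_scale) auto
  ultimately show ?thesis by (rule mdeg_le_congI[rotated])
qed

lemma mdeg_le_xmon_affine:
  assumes A: "A \<in> carrier_mat m m" and b: "b \<in> carrier_vec m"
  shows "S \<subseteq> {..<m} \<Longrightarrow> mdeg_le m (card S) (\<lambda>x. xmon S (A *\<^sub>v x + b))"
proof (induction S rule: infinite_finite_induct)
  case (infinite S)
  then show ?case using finite_subset by blast
next
  case empty
  have "mdeg_le m 0 (xmon {})" using mdeg_le_xmon[of "{}" m] by simp
  then have "mdeg_le m 0 (\<lambda>x. xmon {} (A *\<^sub>v x + b))"
    by (rule mdeg_le_congI) (simp add: xmon_empty)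
  then show ?case by simp
next
  case (insert a S)
  then have "mdeg_le m (1 + card S) (\<lambda>x. (A *\<^sub>v x + b) $ a * xmon S (A *\<^sub>v x + b))"
    by (intro mdeg_le_mult mdeg_le_affine_coord[OF A b]) auto
  then show ?case using insert by (simp add: xmon_insert)
qed

lemma mcoeffs_affine_subst_eq_0:
  assumes A: "A \<in> carrier_mat m m" and b: "b \<in> carrier_vec m"
    and large: "\<And>S. card T \<le> card S \<Longrightarrow> mcoeffs m g S = 0"
  shows "mcoeffs m (\<lambda>x. g (A *\<^sub>v x + b)) T = 0"
proof -
  let ?c = "mcoeffs m g"
  have "mcoeffs m (\<lambda>x. g (A *\<^sub>v x + b)) T
      = mcoeffs m (\<lambda>x. \<Sum>S\<in>Pow {..<m}. ?c S * xmon S (A *\<^sub>v x + b)) T"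
    using A b by (intro fun_cong[OF mcoeffs_cong]) (simp add: eval_mcoeffs flip: eval_mpoly_def)
  also have "\<dots> = (\<Sum>S\<in>Pow {..<m}. ?c S * mcoeffs m (\<lambda>x. xmon S (A *\<^sub>v x + b)) T)"
    by (simp add: mcoeffs_sum mcoeffs_scale)
  also have "\<dots> = 0"
  proof (intro sum.neutral ballI)
    fix S assume S: "S \<in> Pow {..<m}"
    show "?c S * mcoeffs m (\<lambda>x. xmon S (A *\<^sub>v x + b)) T = 0"
    proof (cases "card T \<le> card S")
      case False
      then show ?thesis using mdeg_le_xmon_affine[OF A b, of S] S by (simp add: mdeg_le_def)
    qed (simp add: large)
  qed
  finally show ?thesis .
qed

lemma mdeg_le_affine_subst:
  assumes "A \<in> carrier_mat m m" and "b \<in> carrier_vec m" and "mdeg_le m k g"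
  shows "mdeg_le m k (\<lambda>x. g (A *\<^sub>v x + b))"
  using assms unfolding mdeg_le_def by (auto intro: mcoeffs_affine_subst_eq_0)

lemma invertible_mat_obtain_inverse:
  assumes A: "A \<in> carrier_mat m m" and "invertible_mat A"
  obtains B where "B \<in> carrier_mat m m" "A * B = 1\<^sub>m m" "B * A = 1\<^sub>m m"
proof -
  obtain B where AB: "A * B = 1\<^sub>m (dim_row A)" and BA: "B * A = 1\<^sub>m (dim_row B)"
    using \<open>invertible_mat A\<close> unfolding invertible_mat_def inverts_mat_def by blast
  have "dim_row B = m" "dim_col B = m"
    using arg_cong[OF BA, of dim_col] arg_cong[OF AB, of dim_col] A by auto
  then show ?thesis using that AB BA A by auto
qed

lemma mult_mat_vec_inverse_cancel:
  fixes M N :: "'a::comm_ring_1 mat"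
  assumes "M \<in> carrier_mat m m" "N \<in> carrier_mat m m" "M * N = 1\<^sub>m m" "x \<in> carrier_vec m"
  shows "M *\<^sub>v (N *\<^sub>v x) = x"
  using assms by (metis assoc_mult_mat_vec one_mult_mat_vec)

context
  fixes m :: nat and A B :: "bit mat" and b :: "bit vec"
  assumes A: "A \<in> carrier_mat m m" and B: "B \<in> carrier_mat m m" and b: "b \<in> carrier_vec m"
begin

lemma affine_inverse_left:
  assumes "B * A = 1\<^sub>m m" and x: "x \<in> carrier_vec m"
  shows "B *\<^sub>v (A *\<^sub>v x + b) + B *\<^sub>v b = x"
  using A B b x assms
  by (simp add: mult_add_distrib_mat_vec mult_mat_vec_inverse_cancel bit_vec_add_add_cancel)

lemma affine_inverse_right:
  assumes "A * B = 1\<^sub>m m" and x: "x \<in> carrier_vec m"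
  shows "A *\<^sub>v (B *\<^sub>v x + B *\<^sub>v b) + b = x"
  using A B b x assms
  by (simp add: mult_add_distrib_mat_vec mult_mat_vec_inverse_cancel bit_vec_add_add_cancel)

end

lemma mdeg_le_affine_subst_iff:
  assumes A: "A \<in> carrier_mat m m" and B: "B \<in> carrier_mat m m" and AB: "A * B = 1\<^sub>m m"
    and b: "b \<in> carrier_vec m"
  shows "mdeg_le m k (\<lambda>x. f (A *\<^sub>v x + b)) \<longleftrightarrow> mdeg_le m k f"
proof
  assume "mdeg_le m k (\<lambda>x. f (A *\<^sub>v x + b))"
  then have "mdeg_le m k (\<lambda>x. f (A *\<^sub>v (B *\<^sub>v x + B *\<^sub>v b) + b))"
    using B b mdeg_le_affine_subst[of B m "B *\<^sub>v b" k "\<lambda>x. f (A *\<^sub>v x + b)"] by simp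
  then show "mdeg_le m k f"
    by (rule mdeg_le_congI) (simp add: affine_inverse_right[OF A B b AB])
qed (rule mdeg_le_affine_subst[OF A b])

lemma bij_betw_affine:
  fixes A B :: "bit mat"
  assumes A: "A \<in> carrier_mat m m" and B: "B \<in> carrier_mat m m"
    and AB: "A * B = 1\<^sub>m m" and BA: "B * A = 1\<^sub>m m" and b: "b \<in> carrier_vec m"
  shows "bij_betw (\<lambda>x. A *\<^sub>v x + b) (carrier_vec m) (carrier_vec m)"
  by (rule bij_betwI[where g = "\<lambda>x. B *\<^sub>v x + B *\<^sub>v b"])
    (use A B b affine_inverse_left[OF A B b BA] affine_inverse_right[OF A B b AB] in auto)

section \<open>The coefficient blocks W_r, W_{>r} and the map pi\<close>

lemma Wr_cong:
  assumes "\<And>x. x \<in> carrier_vec m \<Longrightarrow> f x = g x"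
  shows "Wr m r f = Wr m r g"
proof -
  have coeffs: "mcoeffs m f = mcoeffs m g" using assms by (rule mcoeffs_cong)
  show ?thesis unfolding Wr_def Wc_def coeffs ..
qed

lemma Wgt_cong:
  assumes "\<And>x. x \<in> carrier_vec m \<Longrightarrow> f x = g x"
  shows "Wgt m r f = Wgt m r g"
proof -
  have coeffs: "mcoeffs m f = mcoeffs m g" using assms by (rule mcoeffs_cong)
  show ?thesis unfolding Wgt_def Wc_def coeffs ..
qed

lemma Wr_add: "Wr m r (\<lambda>x. f x + g x) = (\<lambda>S. Wr m r f S + Wr m r g S)"
  unfolding Wr_def Wc_def by (auto simp: mcoeffs_add)

lemma Wgt_add: "Wgt m r (\<lambda>x. f x + g x) = (\<lambda>S. Wgt m r f S + Wgt m r g S)"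
  unfolding Wgt_def Wc_def by (auto simp: mcoeffs_add)

lemma Wr_in_vecs: "Wr m r f \<in> vecs m r"
  unfolding Wr_def vecs_def by simp

lemma Wgt_eq_0_iff: "Wgt m r f = (\<lambda>_. 0) \<longleftrightarrow> mdeg_le m r f"
  unfolding Wgt_def Wc_def mdeg_le_def fun_eq_iff using mcoeffs_outside[of _ m f] by metis

lemma Wgt_eq_iff: "Wgt m r f = Wgt m r g \<longleftrightarrow> mdeg_le m r (\<lambda>x. f x + g x)"
  unfolding Wgt_eq_0_iff[symmetric] Wgt_add by (simp add: fun_eq_iff bit_add_eq_0_iff)

lemma vecs_subset_mcoeff_space: "vecs m r \<subseteq> mcoeff_space m"
  by (auto simp: vecs_def layer_def mcoeff_space_def)

lemma mcoeffs_eval_mpoly_vecs: "u \<in> vecs m r \<Longrightarrow> mcoeffs m (eval_mpoly m u) = u"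
  using vecs_subset_mcoeff_space by (blast intro: mcoeffs_eval_mpoly)

lemma Wr_eval_mpoly: "u \<in> vecs m r \<Longrightarrow> Wr m r (eval_mpoly m u) = u"
  by (auto simp: Wr_def Wc_def mcoeffs_eval_mpoly_vecs vecs_def fun_eq_iff)

lemma mdeg_le_eval_mpoly: "u \<in> vecs m r \<Longrightarrow> mdeg_le m r (eval_mpoly m u)"
  by (auto simp: mdeg_le_def mcoeffs_eval_mpoly_vecs vecs_def layer_def)

lemma eval_mpoly_vecs: "u \<in> vecs m r \<Longrightarrow> eval_mpoly m u x = (\<Sum>I\<in>layer m r. u I * xmon I x)"
  unfolding eval_mpoly_def
  by (rule sum.mono_neutral_right) (auto simp: vecs_def layer_def)

lemma pi_map_eq_Wr:
  "u \<in> vecs m r \<Longrightarrow> pi_map m A b r u = Wr m r (\<lambda>x. eval_mpoly m u (A *\<^sub>v x + b))"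
  by (simp add: pi_map_def Wr_def Wc_def eval_mpoly_vecs fun_eq_iff)

lemma pi_map_add: "pi_map m A b r (\<lambda>S. u S + v S) = (\<lambda>S. pi_map m A b r u S + pi_map m A b r v S)"
proof -
  have "(\<lambda>x. \<Sum>I\<in>layer m r. (u I + v I) * xmon I (A *\<^sub>v x + b))
      = (\<lambda>x. (\<Sum>I\<in>layer m r. u I * xmon I (A *\<^sub>v x + b)) + (\<Sum>I\<in>layer m r. v I * xmon I (A *\<^sub>v x + b)))"
    by (simp add: distrib_right sum.distrib)
  then show ?thesis by (simp add: pi_map_def mcoeffs_add fun_eq_iff)
qed

lemma Wr_affine_subst:
  assumes A: "A \<in> carrier_mat m m" and b: "b \<in> carrier_vec m" and f: "mdeg_le m r f"
  shows "Wr m r (\<lambda>x. f (A *\<^sub>v x + b)) = pi_map m A b r (Wr m r f)"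
proof
  fix J
  show "Wr m r (\<lambda>x. f (A *\<^sub>v x + b)) J = pi_map m A b r (Wr m r f) J"
  proof (cases "J \<in> layer m r")
    case False
    then show ?thesis by (simp add: Wr_def pi_map_def)
  next
    case J: True
    \<comment> \<open>f minus its degree-r part: all its monomials have fewer than r variables\<close>
    define g where "g = (\<lambda>x. f x + eval_mpoly m (Wr m r f) x)"
    have coeffs_g: "mcoeffs m g S = mcoeffs m f S + Wr m r f S" for S
      by (simp add: g_def mcoeffs_add mcoeffs_eval_mpoly_vecs[OF Wr_in_vecs])
    have "mcoeffs m g S = 0" if "card J \<le> card S" for S
    proof (cases "S \<in> layer m r")
      case True
      then show ?thesis by (simp add: coeffs_g Wr_def Wc_def)
    next
      case False
      then have "mcoeffs m f S = 0"
        using f that J mcoeffs_outside[of S m f] by (auto simp: mdeg_le_def layer_def)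
      then show ?thesis using False by (simp add: coeffs_g Wr_def)
    qed
    then have "mcoeffs m (\<lambda>x. g (A *\<^sub>v x + b)) J = 0"
      by (rule mcoeffs_affine_subst_eq_0[OF A b])
    then have "mcoeffs m (\<lambda>x. f (A *\<^sub>v x + b)) J
        = mcoeffs m (\<lambda>x. eval_mpoly m (Wr m r f) (A *\<^sub>v x + b)) J"
      by (simp add: g_def mcoeffs_add bit_add_eq_0_iff)
    then show ?thesis
      using J unfolding pi_map_eq_Wr[OF Wr_in_vecs] by (simp add: Wr_def Wc_def)
  qed
qed

lemma pi_map_inverse:
  assumes A: "A \<in> carrier_mat m m" and B: "B \<in> carrier_mat m m" and AB: "A * B = 1\<^sub>m m"
    and b: "b \<in> carrier_vec m" and u: "u \<in> vecs m r"
  shows "pi_map m B (B *\<^sub>v b) r (pi_map m A b r u) = u"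
proof -
  let ?P = "eval_mpoly m u"
  have "mdeg_le m r (\<lambda>x. ?P (A *\<^sub>v x + b))"
    using mdeg_le_eval_mpoly[OF u] by (rule mdeg_le_affine_subst[OF A b])
  then have "pi_map m B (B *\<^sub>v b) r (Wr m r (\<lambda>x. ?P (A *\<^sub>v x + b)))
      = Wr m r (\<lambda>x. ?P (A *\<^sub>v (B *\<^sub>v x + B *\<^sub>v b) + b))"
    using B b by (intro Wr_affine_subst[symmetric]) auto
  also have "\<dots> = Wr m r ?P"
    using affine_inverse_right[OF A B b AB] by (intro Wr_cong) simp
  finally show ?thesis
    using u by (simp add: pi_map_eq_Wr Wr_eval_mpoly)
qed

lemma inj_on_pi_map:
  assumes "A \<in> carrier_mat m m" "B \<in> carrier_mat m m" "A * B = 1\<^sub>m m" "b \<in> carrier_vec m"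
  shows "inj_on (pi_map m A b r) (vecs m r)"
  by (rule inj_on_inverseI, rule pi_map_inverse[OF assms])

lemma Wgt_affine_subst_eq_iff:
  assumes "A \<in> carrier_mat m m" "B \<in> carrier_mat m m" "A * B = 1\<^sub>m m" "b \<in> carrier_vec m"
  shows "Wgt m r (\<lambda>x. z (A *\<^sub>v x + b)) = Wgt m r (\<lambda>x. z' (A *\<^sub>v x + b))
    \<longleftrightarrow> Wgt m r z = Wgt m r z'"
  unfolding Wgt_eq_iff using mdeg_le_affine_subst_iff[OF assms, of r "\<lambda>x. z x + z' x"] by simp

lemma Wr_shift_affine_subst_eq_iff:
  assumes A: "A \<in> carrier_mat m m" and B: "B \<in> carrier_mat m m" and AB: "A * B = 1\<^sub>m m"
    and b: "b \<in> carrier_vec m" and u: "u \<in> vecs m r" and u': "u' \<in> vecs m r"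
    and high: "Wgt m r z = Wgt m r z'"
  shows "(\<lambda>S. pi_map m A b r u S + Wr m r (\<lambda>x. z (A *\<^sub>v x + b)) S)
          = (\<lambda>S. pi_map m A b r u' S + Wr m r (\<lambda>x. z' (A *\<^sub>v x + b)) S)
      \<longleftrightarrow> (\<lambda>S. u S + Wr m r z S) = (\<lambda>S. u' S + Wr m r z' S)"
proof -
  define d where "d = (\<lambda>x. z x + z' x)"
  define v where "v = (\<lambda>S. u S + u' S)"
  have d: "mdeg_le m r d" using high by (simp add: Wgt_eq_iff d_def)
  have v: "v \<in> vecs m r" using u u' by (simp add: v_def vecs_def)
  have "(\<lambda>S. pi_map m A b r u S + Wr m r (\<lambda>x. z (A *\<^sub>v x + b)) S)
          = (\<lambda>S. pi_map m A b r u' S + Wr m r (\<lambda>x. z' (A *\<^sub>v x + b)) S)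
      \<longleftrightarrow> pi_map m A b r v = Wr m r (\<lambda>x. d (A *\<^sub>v x + b))"
    by (simp add: fun_eq_iff bit_add_eq_add_iff pi_map_add v_def d_def Wr_add)
  also have "\<dots> \<longleftrightarrow> pi_map m A b r v = pi_map m A b r (Wr m r d)"
    by (simp add: Wr_affine_subst[OF A b d])
  also have "\<dots> \<longleftrightarrow> v = Wr m r d"
    by (rule inj_on_eq_iff[OF inj_on_pi_map[OF A B AB b] v Wr_in_vecs])
  also have "\<dots> \<longleftrightarrow> (\<lambda>S. u S + Wr m r z S) = (\<lambda>S. u' S + Wr m r z' S)"
    by (simp add: fun_eq_iff bit_add_eq_add_iff v_def d_def Wr_add)
  finally show ?thesis .
qed

section \<open>Invariance of the entropies\<close>

lemma bij_betw_compose_PiE: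
  assumes \<phi>: "bij_betw \<phi> X Y"
  shows "bij_betw (\<lambda>z. compose X z \<phi>) (Y \<rightarrow>\<^sub>E C) (X \<rightarrow>\<^sub>E C)"
proof (rule bij_betwI[where g = "\<lambda>z. compose Y z (inv_into X \<phi>)"])
  have \<psi>: "bij_betw (inv_into X \<phi>) Y X" using \<phi> by (rule bij_betw_inv_into)
  show "(\<lambda>z. compose X z \<phi>) \<in> (Y \<rightarrow>\<^sub>E C) \<rightarrow> (X \<rightarrow>\<^sub>E C)"
    using bij_betwE[OF \<phi>] by (auto simp: compose_def)
  show "(\<lambda>z. compose Y z (inv_into X \<phi>)) \<in> (X \<rightarrow>\<^sub>E C) \<rightarrow> (Y \<rightarrow>\<^sub>E C)"
    using bij_betwE[OF \<psi>] by (auto simp: compose_def)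
  show "compose Y (compose X z \<phi>) (inv_into X \<phi>) = z" if "z \<in> Y \<rightarrow>\<^sub>E C" for z
    using that bij_betwE[OF \<psi>] bij_betw_inv_into_right[OF \<phi>]
    by (intro extensionalityI[where A = Y]) (auto simp: compose_def PiE_iff)
  show "compose X (compose Y z (inv_into X \<phi>)) \<phi> = z" if "z \<in> X \<rightarrow>\<^sub>E C" for z
    using that bij_betwE[OF \<phi>] bij_betw_inv_into_left[OF \<phi>]
    by (intro extensionalityI[where A = X]) (auto simp: compose_def PiE_iff)
qed

lemma Wr_compose: "Wr m r (compose (carrier_vec m) z \<phi>) = Wr m r (\<lambda>x. z (\<phi> x))"
  by (rule Wr_cong) (simp add: compose_eq)

lemma Wgt_compose: "Wgt m r (compose (carrier_vec m) z \<phi>) = Wgt m r (\<lambda>x. z (\<phi> x))"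
  by (rule Wgt_cong) (simp add: compose_eq)

lemma zprob_compose:
  assumes "bij_betw \<phi> (carrier_vec m) (carrier_vec m)"
  shows "zprob m \<delta> (compose (carrier_vec m) z \<phi>) = zprob m \<delta> z"
  unfolding zprob_def
  using prod.reindex_bij_betw[OF assms, of "\<lambda>y. if z y = 1 then \<delta> else 1 - \<delta>"]
  by (simp add: compose_def cong: prod.cong)

lemma entropy2_reindex:
  assumes h: "bij_betw h \<Omega> \<Omega>'" and p: "\<And>\<omega>. \<omega> \<in> \<Omega> \<Longrightarrow> p' (h \<omega>) = p \<omega>"
  shows "entropy2 \<Omega>' p' X = entropy2 \<Omega> p (\<lambda>\<omega>. X (h \<omega>))"
proof -
  have "prob_of \<Omega>' p' X v = prob_of \<Omega> p (\<lambda>\<omega>. X (h \<omega>)) v" for v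
    unfolding prob_of_def sum.reindex_bij_betw[OF h, symmetric] using p by (intro sum.cong) auto
  moreover have "X ` \<Omega>' = (\<lambda>\<omega>. X (h \<omega>)) ` \<Omega>"
    using bij_betw_imp_surj_on[OF h] by auto
  ultimately show ?thesis by (simp add: entropy2_def)
qed

lemma entropy2_cong_level_sets:
  assumes XY: "\<And>\<omega> \<omega>'. \<omega> \<in> \<Omega> \<Longrightarrow> \<omega>' \<in> \<Omega> \<Longrightarrow>
    Y \<omega> = Y \<omega>' \<longleftrightarrow> X \<omega> = X \<omega>'"
  shows "entropy2 \<Omega> p Y = entropy2 \<Omega> p X"
proof -
  define f where "f v = Y (inv_into \<Omega> X v)" for v
  have fX: "f (X \<omega>) = Y \<omega>" if "\<omega> \<in> \<Omega>" for \<omega>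
    using that XY[OF inv_into_into[of "X \<omega>" X \<Omega>]] f_inv_into_f[of "X \<omega>" X \<Omega>]
    by (simp add: f_def)
  have inj: "inj_on f (X ` \<Omega>)"
    using fX XY by (auto simp: inj_on_def)
  have "prob_of \<Omega> p Y (f (X \<omega>)) = prob_of \<Omega> p X (X \<omega>)" if "\<omega> \<in> \<Omega>" for \<omega>
    unfolding prob_of_def using that fX XY by (intro sum.cong) auto
  moreover have "Y ` \<Omega> = f ` X ` \<Omega>" using fX by (auto simp: image_image)
  ultimately show ?thesis
    by (simp add: entropy2_def sum.reindex[OF inj]) (auto intro!: sum.cong)
qed

lemma entropy2_bij_betw:
  assumes h: "bij_betw h \<Omega> \<Omega>'" and p: "\<And>\<omega>. \<omega> \<in> \<Omega> \<Longrightarrow> p' (h \<omega>) = p \<omega>"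
    and X: "\<And>\<omega> \<omega>'. \<omega> \<in> \<Omega> \<Longrightarrow> \<omega>' \<in> \<Omega> \<Longrightarrow>
      X' (h \<omega>) = X' (h \<omega>') \<longleftrightarrow> X \<omega> = X \<omega>'"
  shows "entropy2 \<Omega>' p' X' = entropy2 \<Omega> p X"
proof -
  have "entropy2 \<Omega>' p' X' = entropy2 \<Omega> p (\<lambda>\<omega>. X' (h \<omega>))" using h p by (rule entropy2_reindex)
  also have "\<dots> = entropy2 \<Omega> p X" using X by (rule entropy2_cong_level_sets)
  finally show ?thesis .
qed

lemma dist_W_eqI:
  assumes \<pi>: "bij_betw \<pi> G G'" and \<sigma>: "bij_betw \<sigma> (ZSpace m) (ZSpace m)"
    and zprob: "\<And>z. z \<in> ZSpace m \<Longrightarrow> zprob m \<delta> (\<sigma> z) = zprob m \<delta> z"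
    and high: "\<And>z z'. z \<in> ZSpace m \<Longrightarrow> z' \<in> ZSpace m \<Longrightarrow>
      Wgt m r (\<sigma> z) = Wgt m r (\<sigma> z') \<longleftrightarrow> Wgt m r z = Wgt m r z'"
    and shift: "\<And>u u' z z'. u \<in> G \<Longrightarrow> u' \<in> G \<Longrightarrow> z \<in> ZSpace m \<Longrightarrow> z' \<in> ZSpace m \<Longrightarrow>
      Wgt m r z = Wgt m r z' \<Longrightarrow>
      (\<lambda>S. \<pi> u S + Wr m r (\<sigma> z) S) = (\<lambda>S. \<pi> u' S + Wr m r (\<sigma> z') S)
        \<longleftrightarrow> (\<lambda>S. u S + Wr m r z S) = (\<lambda>S. u' S + Wr m r z' S)"
  shows "dist_W m \<delta> r G' = dist_W m \<delta> r G"
proof -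
  let ?h = "map_prod \<pi> \<sigma>"
  define P where "P H = (\<lambda>(u::nat set \<Rightarrow> bit, z). zprob m \<delta> z / real (card H))"
    for H :: "(nat set \<Rightarrow> bit) set"
  define X where "X = (\<lambda>(u::nat set \<Rightarrow> bit, z). \<lambda>S. u S + Wr m r z S)"
  define Y where "Y = (\<lambda>(u::nat set \<Rightarrow> bit, z). Wgt m r z)"
  have card: "card G' = card G" using bij_betw_same_card[OF \<pi>] by simp
  have h: "bij_betw ?h (G \<times> ZSpace m) (G' \<times> ZSpace m)" using \<pi> \<sigma> by (rule bij_betw_map_prod)
  have p: "P G' (?h \<omega>) = P G \<omega>" if "\<omega> \<in> G \<times> ZSpace m" for \<omega>
    using that zprob card by (auto simp: P_def)
  note entropy2_eq = entropy2_bij_betw[where p' = "P G'" and p = "P G", OF h p]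
  have "entropy2 G' (\<lambda>u. 1 / real (card G')) id = entropy2 G (\<lambda>u. 1 / real (card G)) id"
    by (rule entropy2_bij_betw[OF \<pi>]) (use card bij_betw_imp_inj_on[OF \<pi>] in \<open>auto simp: inj_on_def\<close>)
  moreover have "entropy2 (G' \<times> ZSpace m) (P G') Y = entropy2 (G \<times> ZSpace m) (P G) Y"
    by (rule entropy2_eq) (auto simp: Y_def high)
  moreover have "entropy2 (G' \<times> ZSpace m) (P G') (\<lambda>\<omega>. (X \<omega>, Y \<omega>))
      = entropy2 (G \<times> ZSpace m) (P G) (\<lambda>\<omega>. (X \<omega>, Y \<omega>))"
  proof (rule entropy2_eq)
    fix \<omega> \<omega>' assume "\<omega> \<in> G \<times> ZSpace m" "\<omega>' \<in> G \<times> ZSpace m"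
    then show "(X (?h \<omega>), Y (?h \<omega>)) = (X (?h \<omega>'), Y (?h \<omega>'))
        \<longleftrightarrow> (X \<omega>, Y \<omega>) = (X \<omega>', Y \<omega>')"
      using high shift by (auto simp: X_def Y_def)
  qed
  ultimately show ?thesis
    by (simp add: dist_W_def cond_entropy2_def P_def X_def Y_def)
qed

theorem lemma6p4:
  fixes m r :: nat and \<delta> :: real and A :: "bit mat" and b :: "bit vec"
    and G :: "(nat set \<Rightarrow> bit) set"
  assumes "1 \<le> m" and "r \<le> m" and "0 < \<delta>" and "\<delta> < 1/2"
    and "A \<in> carrier_mat m m" and "invertible_mat A" and "b \<in> carrier_vec m"
    and "f2_subspace m r G"
  shows "dist_W m \<delta> r G = dist_W m \<delta> r (pi_map m A b r ` G)"
proof -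
  note A = \<open>A \<in> carrier_mat m m\<close> and b = \<open>b \<in> carrier_vec m\<close>
  obtain B where B: "B \<in> carrier_mat m m" and AB: "A * B = 1\<^sub>m m" and BA: "B * A = 1\<^sub>m m"
    using invertible_mat_obtain_inverse[OF A \<open>invertible_mat A\<close>] .
  have G: "G \<subseteq> vecs m r" using \<open>f2_subspace m r G\<close> by (simp add: f2_subspace_def)
  have \<phi>: "bij_betw (\<lambda>x. A *\<^sub>v x + b) (carrier_vec m) (carrier_vec m)"
    by (rule bij_betw_affine[OF A B AB BA b])
  show ?thesis
  proof (rule dist_W_eqI[symmetric])
    show "bij_betw (pi_map m A b r) G (pi_map m A b r ` G)"
      using inj_on_subset[OF inj_on_pi_map[OF A B AB b] G] by (rule bij_betw_imageI) simp
    show "bij_betw (\<lambda>z. compose (carrier_vec m) z (\<lambda>x. A *\<^sub>v x + b)) (ZSpace m) (ZSpace m)"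
      unfolding ZSpace_def by (rule bij_betw_compose_PiE[OF \<phi>])
    show "zprob m \<delta> (compose (carrier_vec m) z (\<lambda>x. A *\<^sub>v x + b)) = zprob m \<delta> z" for z
      by (rule zprob_compose[OF \<phi>])
  next
    fix u u' z z'
    show "Wgt m r (compose (carrier_vec m) z (\<lambda>x. A *\<^sub>v x + b))
        = Wgt m r (compose (carrier_vec m) z' (\<lambda>x. A *\<^sub>v x + b)) \<longleftrightarrow> Wgt m r z = Wgt m r z'"
      unfolding Wgt_compose by (rule Wgt_affine_subst_eq_iff[OF A B AB b])
    assume "u \<in> G" "u' \<in> G" and "Wgt m r z = Wgt m r z'"
    with G show "(\<lambda>S. pi_map m A b r u S + Wr m r (compose (carrier_vec m) z (\<lambda>x. A *\<^sub>v x + b)) S)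
        = (\<lambda>S. pi_map m A b r u' S + Wr m r (compose (carrier_vec m) z' (\<lambda>x. A *\<^sub>v x + b)) S)
      \<longleftrightarrow> (\<lambda>S. u S + Wr m r z S) = (\<lambda>S. u' S + Wr m r z' S)"
      unfolding Wr_compose by (intro Wr_shift_affine_subst_eq_iff[OF A B AB b]) auto
  qed
qed

end
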